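(* Let $(\mathbb{P},\le,f)$ be a forcing property for $\mathcal{L}_A$. For every $p\in\mathbb{P}$ and every $\tau\in\mathcal{T}(C)$, $F^w_p(\inf_x d(\tau,x))=0$.
   Context: $\mathcal{L}$ is a countable continuous signature with distinguished metric symbol $d$; formulas of $\mathcal{L}_{\omega_1,\omega}$ are built from atomic formulas using $\neg$, $\tfrac12$, $\dotplus$, countable conjunctions $\bigwedge$ and $\inf_x$. $\mathcal{L}_A$ is a countable fragment, $C=\{c_i:i<\omega\}$ new constants, $\mathcal{L}_A(C)$ the smallest countable fragment of $\mathcal{L}_{\omega_1,\omega}(C)$ containing $\mathcal{L}_A$, $\mathcal{L}_A^{as}(C)$ its atomic sentences, $\mathcal{T}(C)$ closed terms. A forcing property $(\mathbb{P},\le,f)$: poset with $f_p\colon\mathcal{L}_A^{as}(C)\to[0,1]$ such that (1) $p\le q\Rightarrow f_p\le f_q$; (2) for every $p$, $\varepsilon>0$, $\tau,\sigma\in\mathcal{T}(C)$, atomic $\varphi(x)$ there are $q\le p$, $c\in C$ with $f_q(d(\tau,c))<\varepsilon$, $f_q(d(\tau,\sigma))<f_p(d(\sigma,\tau))+\varepsilon$, and if $f_p(d(\tau,\sigma))<\delta_{\varphi,x}(\varepsilon)$ then $f_q(\varphi(\sigma))<f_p(\varphi(\tau))+\varepsilon$. $F_p$: $f_p$ on atomics; $F_p(\neg\varphi)=1-\inf_{q\le p}F_q(\varphi)$; $F_p(\tfrac12\varphi)=\tfrac12F_p(\varphi)$; $F_p(\varphi\dotplus\psi)=\min(F_p(\varphi)+F_p(\psi),1)$;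 $F_p(\bigwedge\Phi)=\inf_{\varphi\in\Phi}F_p(\varphi)$; $F_p(\inf_x\varphi)=\inf_{c\in C}F_p(\varphi(c))$. $F^w_p(\varphi)=\sup_{q\le p}\inf_{q'\le q}F_{q'}(\varphi)$. *)

theory Defs
  imports Complex_Main "HOL-Library.Countable"
begin

text \<open>Terms over function symbols 'f, with variables Var n and the new constants
  C = {c_i : i < omega}, written Cst i.\<close>
datatype 'f trm = Var nat | Cst nat | Fn 'f "'f trm list"

text \<open>Formulas: atomic R(t1..tn) (the metric d is a distinguished relation symbol),
  negation, one-half, truncated sum, countable (nonempty) conjunction, inf over a variable.\<close>
datatype ('f, 'r) fm =
    Atom 'r "'f trm list"
  | Neg "('f, 'r) fm"
  | Half "('f, 'r) fm"
  | Dplus "('f, 'r) fm" "('f, 'r) fm"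
  | Conj "nat \<Rightarrow> ('f, 'r) fm"
  | Infx nat "('f, 'r) fm"

fun tsubst :: "(nat \<Rightarrow> 'f trm) \<Rightarrow> 'f trm \<Rightarrow> 'f trm" where
  "tsubst e (Var n) = e n"
| "tsubst e (Cst i) = Cst i"
| "tsubst e (Fn g ts) = Fn g (map (tsubst e) ts)"

fun tvars :: "'f trm \<Rightarrow> nat set" where
  "tvars (Var n) = {n}"
| "tvars (Cst i) = {}"
| "tvars (Fn g ts) = \<Union> (set (map tvars ts))"

fun wf_trm :: "('f \<Rightarrow> nat) \<Rightarrow> 'f trm \<Rightarrow> bool" where
  "wf_trm ar (Var n) = True"
| "wf_trm ar (Cst i) = True"
| "wf_trm ar (Fn g ts) = (length ts = ar g \<and> (\<forall>t\<in>set ts. wf_trm ar t))"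

definition closed_trm :: "('f \<Rightarrow> nat) \<Rightarrow> 'f trm \<Rightarrow> bool" where
  "closed_trm arF t \<longleftrightarrow> wf_trm arF t \<and> tvars t = {}"

type_synonym ('f, 'r) atom = "'r \<times> 'f trm list"

definition wf_atom :: "('f \<Rightarrow> nat) \<Rightarrow> ('r \<Rightarrow> nat) \<Rightarrow> ('f, 'r) atom \<Rightarrow> bool" where
  "wf_atom arF arR a \<longleftrightarrow> length (snd a) = arR (fst a) \<and> (\<forall>t\<in>set (snd a). wf_trm arF t)"

text \<open>Atomic sentences of L_A(C) (every fragment contains all atomic formulas).\<close>
definition atomic_sentence :: "('f \<Rightarrow> nat) \<Rightarrow> ('r \<Rightarrow> nat) \<Rightarrow> ('f, 'r) atom \<Rightarrow> bool" where
  "atomic_sentence arF arR a \<longleftrightarrow> wf_atom arF arR a \<and> (\<forall>t\<in>set (snd a). tvars t = {})"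

definition atomic_in :: "('f \<Rightarrow> nat) \<Rightarrow> ('r \<Rightarrow> nat) \<Rightarrow> nat \<Rightarrow> ('f, 'r) atom \<Rightarrow> bool" where
  "atomic_in arF arR x a \<longleftrightarrow> wf_atom arF arR a \<and> (\<forall>t\<in>set (snd a). tvars t \<subseteq> {x})"

definition atom_inst :: "('f, 'r) atom \<Rightarrow> nat \<Rightarrow> 'f trm \<Rightarrow> ('f, 'r) atom" where
  "atom_inst a x s = (fst a, map (tsubst (Var(x := s))) (snd a))"

abbreviation dist_atom :: "'r \<Rightarrow> 'f trm \<Rightarrow> 'f trm \<Rightarrow> ('f, 'r) atom" where
  "dist_atom d t s \<equiv> (d, [t, s])"

text \<open>The parameter delta :: atom => var => real => real is the modulus delta_{phi,x}
  associated (via the signature) with the atomic formula phi(x); it is left arbitrary.\<close>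
definition forcing_property ::
  "('f \<Rightarrow> nat) \<Rightarrow> ('r \<Rightarrow> nat) \<Rightarrow> 'r \<Rightarrow> (('f, 'r) atom \<Rightarrow> nat \<Rightarrow> real \<Rightarrow> real)
   \<Rightarrow> ('p::order \<Rightarrow> ('f, 'r) atom \<Rightarrow> real) \<Rightarrow> bool" where
  "forcing_property arF arR d \<delta> f \<longleftrightarrow>
     arR d = 2 \<and>
     (\<forall>p a. atomic_sentence arF arR a \<longrightarrow> f p a \<in> {0..1}) \<and>
     (\<forall>p q a. p \<le> q \<longrightarrow> atomic_sentence arF arR a \<longrightarrow> f p a \<le> f q a) \<and>
     (\<forall>p \<epsilon> \<tau> \<sigma> x \<phi>. \<epsilon> > 0 \<longrightarrow> closed_trm arF \<tau> \<longrightarrow> closed_trm arF \<sigma> \<longrightarrow>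
        atomic_in arF arR x \<phi> \<longrightarrow>
        (\<exists>q c. q \<le> p \<and>
           f q (dist_atom d \<tau> (Cst c)) < \<epsilon> \<and>
           f q (dist_atom d \<tau> \<sigma>) < f p (dist_atom d \<sigma> \<tau>) + \<epsilon> \<and>
           (f p (dist_atom d \<tau> \<sigma>) < \<delta> \<phi> x \<epsilon> \<longrightarrow>
              f q (atom_inst \<phi> x \<sigma>) < f p (atom_inst \<phi> x \<tau>) + \<epsilon>)))"

text \<open>F_p, defined with an environment e assigning closed terms (constants) to variables;
  for a sentence take e = Var.  F_p(inf_x phi) = inf_{c in C} F_p(phi(c)).\<close>
primrec Fval :: "('p::order \<Rightarrow> ('f, 'r) atom \<Rightarrow> real) \<Rightarrow> (nat \<Rightarrow> 'f trm)
                 \<Rightarrow> ('f, 'r) fm \<Rightarrow> 'p \<Rightarrow> real" where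
  "Fval f e (Atom r ts) p = f p (r, map (tsubst e) ts)"
| "Fval f e (Neg \<phi>) p = 1 - (INF q\<in>{q. q \<le> p}. Fval f e \<phi> q)"
| "Fval f e (Half \<phi>) p = Fval f e \<phi> p / 2"
| "Fval f e (Dplus \<phi> \<psi>) p = min (Fval f e \<phi> p + Fval f e \<psi> p) 1"
| "Fval f e (Conj \<Phi>) p = (INF n. Fval f e (\<Phi> n) p)"
| "Fval f e (Infx x \<phi>) p = (INF c. Fval f (e(x := Cst c)) \<phi> p)"

definition F :: "('p::order \<Rightarrow> ('f, 'r) atom \<Rightarrow> real) \<Rightarrow> ('f, 'r) fm \<Rightarrow> 'p \<Rightarrow> real" where
  "F f \<phi> p = Fval f Var \<phi> p"

definition Fw :: "('p::order \<Rightarrow> ('f, 'r) atom \<Rightarrow> real) \<Rightarrow> ('f, 'r) fm \<Rightarrow> 'p \<Rightarrow> real" where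
  "Fw f \<phi> p = (SUP q\<in>{q. q \<le> p}. INF q'\<in>{q'. q' \<le> q}. F f \<phi> q')"

end

theory Submission
  imports Defs
begin

text \<open>Density condition (2) of a forcing property yields, below any condition, one forcing
  \<open>d(\<tau>, c)\<close> to be arbitrarily small for some constant \<open>c\<close>.  Hence \<open>F\<^sub>q(inf\<^sub>x d(\<tau>, x))\<close>
  gets arbitrarily small below every condition, so its infimum below any \<open>q\<close> is \<open>0\<close>
  and so is the supremum of these infima.\<close>

lemma tsubst_closed: "tvars t = {} \<Longrightarrow> tsubst e t = t"
  by (induction t) (auto simp: map_idI)

lemma F_Infx_dist_closed:
  assumes "tvars \<tau> = {}"
  shows "F f (Infx x (Atom d [\<tau>, Var x])) q = (INF c. f q (d, [\<tau>, Cst c]))"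
  by (simp add: F_def tsubst_closed[OF assms])

lemma forcing_property_nonneg:
  assumes "forcing_property arF arR d \<delta> f" and "atomic_sentence arF arR a"
  shows "0 \<le> f p a"
  using assms unfolding forcing_property_def by (cases a) auto

lemma forcing_property_dist_atomic_sentence:
  assumes "forcing_property arF arR d \<delta> f" and "closed_trm arF \<tau>" and "closed_trm arF \<sigma>"
  shows "atomic_sentence arF arR (dist_atom d \<tau> \<sigma>)"
  using assms unfolding forcing_property_def atomic_sentence_def wf_atom_def closed_trm_def
  by auto

lemma forcing_property_dist_Cst_small:
  assumes fp: "forcing_property arF arR d \<delta> f" and "closed_trm arF \<tau>" and "\<epsilon> > 0"
  obtains q c where "q \<le> p" and "f q (dist_atom d \<tau> (Cst c)) < \<epsilon>"
proof -
  have "atomic_in arF arR x (dist_atom d (Var x) (Var x))" for x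
    using fp unfolding forcing_property_def atomic_in_def wf_atom_def by auto
  with assms show ?thesis
    using that unfolding forcing_property_def by blast
qed

lemma INF_below_eq_zero:
  fixes g :: "'p::order \<Rightarrow> real"
  assumes nonneg: "\<And>q. 0 \<le> g q"
    and small: "\<And>q \<epsilon>. \<epsilon> > 0 \<Longrightarrow> \<exists>q'\<le>q. g q' < \<epsilon>"
  shows "(INF q'\<in>{q'. q' \<le> q}. g q') = 0"
proof -
  let ?I = "INF q'\<in>{q'. q' \<le> q}. g q'"
  have "0 \<le> ?I"
    by (rule cINF_greatest) (auto simp: nonneg)
  moreover have "\<not> ?I > 0"
  proof
    assume "?I > 0"
    then obtain q' where "q' \<le> q" and "g q' < ?I"
      using small by blast
    moreover have "?I \<le> g q'"
      using \<open>q' \<le> q\<close> by (intro cINF_lower bdd_belowI[where m = 0]) (auto simp: nonneg)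
    ultimately show False by simp
  qed
  ultimately show ?thesis by simp
qed

lemma Fw_eq_zero:
  assumes "\<And>q. 0 \<le> F f \<phi> q"
    and "\<And>q \<epsilon>. \<epsilon> > 0 \<Longrightarrow> \<exists>q'\<le>q. F f \<phi> q' < \<epsilon>"
  shows "Fw f \<phi> p = 0"
proof -
  have "{q. q \<le> p} \<noteq> {}" by auto
  then show ?thesis
    using INF_below_eq_zero[of "F f \<phi>", OF assms] by (simp add: Fw_def)
qed

theorem lemma2p10:
  fixes arF :: "'f::countable \<Rightarrow> nat" and arR :: "'r::countable \<Rightarrow> nat" and d :: 'r
    and \<delta> :: "('f, 'r) atom \<Rightarrow> nat \<Rightarrow> real \<Rightarrow> real"
    and f :: "'p::order \<Rightarrow> ('f, 'r) atom \<Rightarrow> real"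
    and p :: 'p and \<tau> :: "'f trm" and x :: nat
  assumes fp: "forcing_property arF arR d \<delta> f"
    and cl: "closed_trm arF \<tau>"
  shows "Fw f (Infx x (Atom d [\<tau>, Var x])) p = 0"
proof (rule Fw_eq_zero)
  have F_eq: "F f (Infx x (Atom d [\<tau>, Var x])) q = (INF c. f q (d, [\<tau>, Cst c]))" for q
    using cl by (simp add: F_Infx_dist_closed closed_trm_def)
  have nonneg: "0 \<le> f q (d, [\<tau>, Cst c])" for q c
    using fp cl by (intro forcing_property_nonneg forcing_property_dist_atomic_sentence)
      (auto simp: closed_trm_def)
  show "0 \<le> F f (Infx x (Atom d [\<tau>, Var x])) q" for q
    unfolding F_eq by (rule cINF_greatest) (auto simp: nonneg)
  show "\<exists>q'\<le>q. F f (Infx x (Atom d [\<tau>, Var x])) q' < \<epsilon>" if "\<epsilon> > 0" for q \<epsilon>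
  proof -
    obtain q' c where "q' \<le> q" and small: "f q' (d, [\<tau>, Cst c]) < \<epsilon>"
      using forcing_property_dist_Cst_small[OF fp cl \<open>\<epsilon> > 0\<close>] by blast
    have "F f (Infx x (Atom d [\<tau>, Var x])) q' \<le> f q' (d, [\<tau>, Cst c])"
      unfolding F_eq by (intro cINF_lower bdd_belowI[where m = 0]) (auto simp: nonneg)
    with \<open>q' \<le> q\<close> small show ?thesis by force
  qed
qed

end
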